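(* Let $(A,d,\Delta,\mu)$ be a connected DG-bialgebra over $\mathbb{Z}_2$ and $\Omega A$ its reduced cobar construction. Define $\smile_1:\Omega A\otimes\Omega A\to\Omega A$ on generators by $$[a_1,\dots,a_m]\smile_1[b_1,\dots,b_n]=\sum_{k=1}^m[a_1,\dots,a_{k-1},a_k^{(1)}\cdot b_1,\dots,a_k^{(n)}\cdot b_n,a_{k+1},\dots,a_m],$$ where $\Delta^n(a_k)=a_k^{(1)}\otimes\cdots\otimes a_k^{(n)}$ (summation understood). Then for all $x,y\in\Omega A$, $$d_\Omega(x\smile_1 y)=d_\Omega x\smile_1 y+x\smile_1 d_\Omega y+x\cdot y+y\cdot x,$$ where $\cdot$ is the (concatenation) product of $\Omega A$; in particular $d_\Omega([a_1,\dots,a_m]\smile_1[b_1,\dots,b_n])=d_\Omega[a_1,\dots,a_m]\smile_1[b_1,\dots,b_n]+[a_1,\dots,a_m]\smile_1 d_\Omega[b_1,\dots,b_n]+[a_1,\dots,a_m,b_1,\dots,b_n]+[b_1,\dots,b_n,a_1,\dots,a_m]$.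
   Context: Work over $\mathbb{Z}_2$ (signs ignored). A DG-bialgebra $(A,d,\Delta,\mu)$ is a DG-coalgebra $(A,d,\Delta)$ with counit, together with an associative unital multiplication $\mu:A\otimes A\to A$, $a\cdot b=\mu(a\otimes b)$, which is a morphism of DG-coalgebras. It is connected if its degree-0 part is $\mathbb{Z}_2$; $\bar A$ denotes the positive-degree part. $\Delta^n:A\to A^{\otimes n}$ is the iterated diagonal: $\Delta^1=\mathrm{id}$, $\Delta^2=\Delta$, $\Delta^n=(\Delta^{n-1}\otimes\mathrm{id})\Delta$. Write $\Delta=\mathrm{id}\otimes1+1\otimes\mathrm{id}+\Delta'$. The reduced cobar construction $\Omega A$ is the tensor algebra $T(s\bar A)$ on the shifted positive part, with elements written $[a_1,\dots,a_n]$ and product given by concatenation; its differential is the derivation $d_\Omega=d_1+d_2$ determined on generators by $d_1[a]=[da]$ and $d_2[a]=\sum[a',a'']$ where $\Delta'(a)=\sum a'\otimes a''$. *)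

theory Defs
  imports Main
begin

text \<open>
A graded Z_2-vector space is given by a homogeneous basis,
namely the type 'b together with a degree function deg. A vector is a finite set of
basis elements (its support; coefficients in Z_2), addition is symmetric difference.
The basis of a tensor power is given by tuples/lists of basis elements, so a tensor
of vectors is the product set of their supports. A linear map is determined by its
values on basis elements and extended linearly by zsum.
\<close>

definition vadd :: "'a set \<Rightarrow> 'a set \<Rightarrow> 'a set" where
  "vadd X Y = (X - Y) \<union> (Y - X)"

definition zsum :: "('a \<Rightarrow> 'c set) \<Rightarrow> 'a set \<Rightarrow> 'c set" where
  "zsum f X = {c. odd (card {x \<in> X. c \<in> f x})}"

text \<open>Value of the counit (a functional given on the basis) on a vector.\<close>
definition eps_vec :: "('b \<Rightarrow> bool) \<Rightarrow> 'b set \<Rightarrow> bool" where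
  "eps_vec eps V = odd (card {c \<in> V. eps c})"

text \<open>
Connected DG-bialgebra over Z_2 with homogeneous basis 'b: degree deg, differential dA
(homogeneous of degree +1 or -1), diagonal cop, counit eps, multiplication mu, and unit e
(the unique basis element of degree 0, spanning A_0 = Z_2).
\<close>
definition conn_dg_bialgebra ::
  "('b \<Rightarrow> nat) \<Rightarrow> 'b \<Rightarrow> ('b \<Rightarrow> bool) \<Rightarrow> ('b \<Rightarrow> 'b set) \<Rightarrow> ('b \<Rightarrow> ('b \<times> 'b) set)
     \<Rightarrow> ('b \<Rightarrow> 'b \<Rightarrow> 'b set) \<Rightarrow> bool" where
  "conn_dg_bialgebra deg e eps dA cop mu \<longleftrightarrow>
     \<comment> \<open>finiteness of the values of the structure maps on basis elements\<close>
     (\<forall>b. finite (dA b) \<and> finite (cop b)) \<and> (\<forall>a b. finite (mu a b)) \<and>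
     \<comment> \<open>homogeneity (all structure maps are graded maps of the appropriate degree)\<close>
     (\<exists>\<delta>::int. (\<delta> = 1 \<or> \<delta> = -1) \<and> (\<forall>b c. c \<in> dA b \<longrightarrow> int (deg c) = int (deg b) + \<delta>)) \<and>
     (\<forall>b x y. (x, y) \<in> cop b \<longrightarrow> deg x + deg y = deg b) \<and>
     (\<forall>a b c. c \<in> mu a b \<longrightarrow> deg c = deg a + deg b) \<and>
     (\<forall>b. eps b \<longrightarrow> deg b = 0) \<and>
     \<comment> \<open>connected: A_0 = Z_2, spanned by the unit e\<close>
     (\<forall>b. deg b = 0 \<longleftrightarrow> b = e) \<and>
     \<comment> \<open>differential\<close>
     (\<forall>b. zsum dA (dA b) = {}) \<and>
     \<comment> \<open>DG-coalgebra: coassociativity, counit, Delta and eps are chain maps\<close>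
     (\<forall>b. zsum (\<lambda>(x, y). (\<lambda>(x1, x2). (x1, x2, y)) ` cop x) (cop b)
         = zsum (\<lambda>(x, y). (\<lambda>(y1, y2). (x, y1, y2)) ` cop y) (cop b)) \<and>
     (\<forall>b. zsum (\<lambda>(x, y). if eps x then {y} else {}) (cop b) = {b}) \<and>
     (\<forall>b. zsum (\<lambda>(x, y). if eps y then {x} else {}) (cop b) = {b}) \<and>
     (\<forall>b. zsum cop (dA b)
         = zsum (\<lambda>(x, y). vadd ((\<lambda>x'. (x', y)) ` dA x) ((\<lambda>y'. (x, y')) ` dA y)) (cop b)) \<and>
     (\<forall>b. \<not> eps_vec eps (dA b)) \<and>
     \<comment> \<open>associative unital multiplication\<close>
     (\<forall>x y z. zsum (\<lambda>c. mu c z) (mu x y) = zsum (mu x) (mu y z)) \<and>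
     (\<forall>b. mu e b = {b} \<and> mu b e = {b}) \<and>
     \<comment> \<open>mu is a morphism of DG-coalgebras A \<otimes> A \<rightarrow> A\<close>
     (\<forall>a b. zsum dA (mu a b) = vadd (zsum (\<lambda>c. mu c b) (dA a)) (zsum (mu a) (dA b))) \<and>
     (\<forall>a b. zsum cop (mu a b)
         = zsum (\<lambda>((a1, a2), (b1, b2)). mu a1 b1 \<times> mu a2 b2) (cop a \<times> cop b)) \<and>
     (\<forall>a b. eps_vec eps (mu a b) \<longleftrightarrow> eps a \<and> eps b)"

text \<open>Reduced diagonal Delta' = Delta + id \<otimes> 1 + 1 \<otimes> id.\<close>
definition red_cop :: "('b \<Rightarrow> ('b \<times> 'b) set) \<Rightarrow> 'b \<Rightarrow> 'b \<Rightarrow> ('b \<times> 'b) set" where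
  "red_cop cop e a = vadd (cop a) {(a, e), (e, a)}"

text \<open>Iterated diagonal Delta^n : A \<rightarrow> A^{\<otimes> n}; Delta^0 is the counit (convention).\<close>
fun itdiag :: "('b \<Rightarrow> bool) \<Rightarrow> ('b \<Rightarrow> ('b \<times> 'b) set) \<Rightarrow> nat \<Rightarrow> 'b \<Rightarrow> 'b list set" where
  "itdiag eps cop 0 a = (if eps a then {[]} else {})"
| "itdiag eps cop (Suc 0) a = {[a]}"
| "itdiag eps cop (Suc (Suc n)) a =
     zsum (\<lambda>(x, y). (\<lambda>l. l @ [y]) ` itdiag eps cop (Suc n) x) (cop a)"

definition subst_slot :: "'b list \<Rightarrow> nat \<Rightarrow> 'b list set \<Rightarrow> 'b list set" where
  "subst_slot w k V = (\<lambda>z. take k w @ z @ drop (Suc k) w) ` V"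

text \<open>Elements of the reduced cobar construction Omega A = T(s bar A): finite Z_2-combinations
  of words [a_1,...,a_n] of basis elements of bar A (i.e. basis elements other than e).\<close>
definition cobar_elem :: "'b \<Rightarrow> 'b list set \<Rightarrow> bool" where
  "cobar_elem e X \<longleftrightarrow> finite X \<and> (\<forall>w \<in> X. e \<notin> set w)"

definition omult :: "'b list set \<Rightarrow> 'b list set \<Rightarrow> 'b list set" where
  "omult X Y = zsum (\<lambda>(u, v). {u @ v}) (X \<times> Y)"

text \<open>Cobar differential d_Omega = d_1 + d_2 (derivation extending its values on generators).\<close>
definition dOmega_word :: "'b \<Rightarrow> ('b \<Rightarrow> 'b set) \<Rightarrow> ('b \<Rightarrow> ('b \<times> 'b) set) \<Rightarrow> 'b list \<Rightarrow> 'b list set" where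
  "dOmega_word e dA cop w =
     zsum (\<lambda>k. vadd (subst_slot w k ((\<lambda>c. [c]) ` dA (w ! k)))
                     (subst_slot w k ((\<lambda>(x, y). [x, y]) ` red_cop cop e (w ! k))))
          {..<length w}"

definition dOmega :: "'b \<Rightarrow> ('b \<Rightarrow> 'b set) \<Rightarrow> ('b \<Rightarrow> ('b \<times> 'b) set) \<Rightarrow> 'b list set \<Rightarrow> 'b list set" where
  "dOmega e dA cop X = zsum (dOmega_word e dA cop) X"

definition cup1_word :: "('b \<Rightarrow> bool) \<Rightarrow> ('b \<Rightarrow> ('b \<times> 'b) set) \<Rightarrow> ('b \<Rightarrow> 'b \<Rightarrow> 'b set)
     \<Rightarrow> 'b list \<Rightarrow> 'b list \<Rightarrow> 'b list set" where
  "cup1_word eps cop mu u v =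
     zsum (\<lambda>k. zsum (\<lambda>cs. subst_slot u k (listset (map2 mu cs v)))
                     (itdiag eps cop (length v) (u ! k)))
          {..<length u}"

definition cup1 :: "('b \<Rightarrow> bool) \<Rightarrow> ('b \<Rightarrow> ('b \<times> 'b) set) \<Rightarrow> ('b \<Rightarrow> 'b \<Rightarrow> 'b set)
     \<Rightarrow> 'b list set \<Rightarrow> 'b list set \<Rightarrow> 'b list set" where
  "cup1 eps cop mu X Y = zsum (\<lambda>(u, v). cup1_word eps cop mu u v) (X \<times> Y)"

end

theory Submission
  imports Defs "HOL-Library.Z2"
begin

text \<open>Both sides are bilinear, so it suffices to treat two words u, w without the unit letter e.
  Both d_Omega and the cup-1 product are derivations in u (one letter is replaced at a time), and
  with the Hirsch formula (u1 u2) cup_1 z = u1 (u2 cup_1 z) + (u1 cup_1 z) u2 the formula for u1 and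
  for u2 gives it for u1 u2; so it reduces to a single letter u = [a].
  There, [a] cup_1 (w b) is the sum over the diagonal a' (x) a'' of a of ([a'] cup_1 w) [a'' b],
  and d([a] cup_1 w) is computed by induction on the length of w, using that the diagonal is
  coassociative and commutes with d and that the product is a chain map and a coalgebra map.
  The computation is done with the full diagonal instead of the reduced one; the resulting
  words containing e cancel in pairs, except that [a, e] cup_1 w and [e, a] cup_1 w leave
  exactly the products [a] w and w [a].\<close>

section \<open>Z_2-vector spaces of finite sets\<close>

(* The library rewrites + and * on bit into XOR and AND, which gets in the way of ring reasoning. *)
declare add_bit_eq_xor [simp del] mult_bit_eq_and [simp del]
  bit_not_zero_iff [simp del] bit_not_one_iff [simp del]

text \<open>A set is identified with its Z_2-valued indicator function; then \<open>zsum\<close> becomes an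
  ordinary finite sum in the field \<open>bit\<close>, and \<open>vadd\<close> becomes addition.\<close>

definition coeff :: "'a set \<Rightarrow> 'a \<Rightarrow> bit" where
  "coeff S c = of_bool (c \<in> S)"

lemma of_nat_bit: "(of_nat n :: bit) = of_bool (odd n)"
  by (induction n) auto

lemma coeff_zsum: "finite X \<Longrightarrow> coeff (zsum f X) c = (\<Sum>x\<in>X. coeff (f x) c)"
  by (simp add: coeff_def zsum_def sum_of_bool_eq of_nat_bit Int_def conj_commute)

lemma coeff_vadd: "coeff (vadd A B) c = coeff A c + coeff B c"
  by (auto simp: coeff_def vadd_def)

lemma set_eq_coeffI: "(\<And>c. coeff A c = coeff B c) \<Longrightarrow> A = B"
  by (auto simp: coeff_def set_eq_iff of_bool_eq_iff)

lemma sum_coeff_mult: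
  assumes "finite U" and "Z \<subseteq> U"
  shows "(\<Sum>y\<in>U. coeff Z y * g y) = (\<Sum>y\<in>Z. g y)"
proof -
  have "(\<Sum>y\<in>U. coeff Z y * g y) = (\<Sum>y\<in>U. if y \<in> Z then g y else 0)"
    by (rule sum.cong) (simp_all add: coeff_def)
  also have "\<dots> = (\<Sum>y\<in>Z. g y)"
    using assms by (simp add: sum.If_cases Int_absorb1)
  finally show ?thesis .
qed

lemma vadd_assoc: "vadd (vadd A B) C = vadd A (vadd B C)"
  by (rule set_eq_coeffI) (simp add: coeff_vadd add.assoc)

lemma vadd_commute: "vadd A B = vadd B A"
  by (rule set_eq_coeffI) (simp add: coeff_vadd add.commute)

lemma vadd_left_commute: "vadd A (vadd B C) = vadd B (vadd A C)"
  by (rule set_eq_coeffI) (simp add: coeff_vadd add.left_commute)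

lemmas vadd_ac = vadd_assoc vadd_commute vadd_left_commute

lemma vadd_self [simp]: "vadd A A = {}"
  by (simp add: vadd_def)

lemma vadd_self_left [simp]: "vadd A (vadd A B) = B"
  by (simp flip: vadd_assoc) (simp add: vadd_def)

lemma vadd_empty [simp]: "vadd A {} = A" "vadd {} A = A"
  by (auto simp: vadd_def)

lemma finite_vadd [simp]: "finite A \<Longrightarrow> finite B \<Longrightarrow> finite (vadd A B)"
  by (simp add: vadd_def)

lemma image_vadd: "inj h \<Longrightarrow> h ` vadd A B = vadd (h ` A) (h ` B)"
  by (auto simp: vadd_def dest: injD)

lemma zsum_empty [simp]: "zsum f {} = {}"
  by (simp add: zsum_def)

lemma zsum_singleton [simp]: "zsum f {x} = f x"
  by (auto simp: zsum_def Collect_conv_if)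

lemma zsum_zero [simp]: "zsum (\<lambda>x. {}) X = {}"
  by (simp add: zsum_def)

lemma zsum_cong: "(\<And>x. x \<in> X \<Longrightarrow> f x = g x) \<Longrightarrow> zsum f X = zsum g X"
  by (simp add: zsum_def cong: conj_cong)

lemma zsum_cong_pair:
  "(\<And>p q. (p, q) \<in> S \<Longrightarrow> f p q = g p q) \<Longrightarrow> zsum (\<lambda>(p, q). f p q) S = zsum (\<lambda>(p, q). g p q) S"
  by (rule zsum_cong) (auto split: prod.split)

lemma zsum_subset: "zsum f X \<subseteq> \<Union> (f ` X)"
  by (auto simp: zsum_def) (metis (mono_tags, lifting) card.empty empty_Collect_eq even_zero)

lemma finite_zsum [simp]: "finite X \<Longrightarrow> (\<And>x. x \<in> X \<Longrightarrow> finite (f x)) \<Longrightarrow> finite (zsum f X)"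
  by (rule finite_subset[OF zsum_subset]) simp

lemma finite_case_prod [simp]: "(\<And>p q. finite (f p q)) \<Longrightarrow> finite (case x of (p, q) \<Rightarrow> f p q)"
  by (cases x) simp

lemma zsum_vadd: "finite X \<Longrightarrow> zsum (\<lambda>x. vadd (f x) (g x)) X = vadd (zsum f X) (zsum g X)"
  by (rule set_eq_coeffI) (simp add: coeff_zsum coeff_vadd sum.distrib)

lemma zsum_vadd_pair:
  "finite S \<Longrightarrow> zsum (\<lambda>(p, q). vadd (f p q) (g p q)) S
     = vadd (zsum (\<lambda>(p, q). f p q) S) (zsum (\<lambda>(p, q). g p q) S)"
  by (subst zsum_vadd[symmetric]) (simp_all add: split_def)

lemma zsum_vadd_set:
  assumes X: "finite X" and Y: "finite Y"
  shows "zsum f (vadd X Y) = vadd (zsum f X) (zsum f Y)"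
proof (rule set_eq_coeffI)
  fix c
  let ?U = "X \<union> Y" and ?g = "\<lambda>x. coeff (f x) c"
  have "vadd X Y \<subseteq> ?U" by (auto simp: vadd_def)
  then have "coeff (zsum f (vadd X Y)) c = (\<Sum>x\<in>?U. coeff (vadd X Y) x * ?g x)"
    using X Y by (simp add: coeff_zsum sum_coeff_mult)
  also have "\<dots> = (\<Sum>x\<in>?U. coeff X x * ?g x) + (\<Sum>x\<in>?U. coeff Y x * ?g x)"
    by (simp add: coeff_vadd distrib_right sum.distrib)
  also have "\<dots> = coeff (vadd (zsum f X) (zsum f Y)) c"
    using X Y by (simp add: sum_coeff_mult coeff_vadd coeff_zsum)
  finally show "coeff (zsum f (vadd X Y)) c = coeff (vadd (zsum f X) (zsum f Y)) c" .
qed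

lemma zsum_Un_disjoint:
  "finite X \<Longrightarrow> finite Y \<Longrightarrow> X \<inter> Y = {} \<Longrightarrow> zsum f (X \<union> Y) = vadd (zsum f X) (zsum f Y)"
  by (metis Diff_triv inf_commute vadd_def zsum_vadd_set)

lemma zsum_zsum:
  assumes X: "finite X" and F: "\<And>x. x \<in> X \<Longrightarrow> finite (f x)"
  shows "zsum g (zsum f X) = zsum (\<lambda>x. zsum g (f x)) X"
proof (rule set_eq_coeffI)
  fix c
  let ?U = "\<Union> (f ` X)" and ?g = "\<lambda>y. coeff (g y) c"
  have U: "finite ?U" using X F by simp
  have "coeff (zsum g (zsum f X)) c = (\<Sum>y\<in>zsum f X. ?g y)"
    using X F by (simp add: coeff_zsum)
  also have "\<dots> = (\<Sum>y\<in>?U. coeff (zsum f X) y * ?g y)"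
    using U zsum_subset by (rule sum_coeff_mult[symmetric])
  also have "\<dots> = (\<Sum>x\<in>X. \<Sum>y\<in>?U. coeff (f x) y * ?g y)"
    using X by (simp add: coeff_zsum sum_distrib_right sum.swap[of _ ?U])
  also have "\<dots> = coeff (zsum (\<lambda>x. zsum g (f x)) X) c"
    using X F U by (simp add: coeff_zsum sum_coeff_mult UN_upper)
  finally show "coeff (zsum g (zsum f X)) c = coeff (zsum (\<lambda>x. zsum g (f x)) X) c" .
qed

lemma zsum_zsum_pair:
  "finite S \<Longrightarrow> (\<And>p q. finite (f p q)) \<Longrightarrow>
     zsum g (zsum (\<lambda>(p, q). f p q) S) = zsum (\<lambda>(p, q). zsum g (f p q)) S"
  by (subst zsum_zsum) (simp_all add: split_def)

lemma zsum_image: "inj_on h X \<Longrightarrow> zsum f (h ` X) = zsum (\<lambda>x. f (h x)) X"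
proof -
  assume inj: "inj_on h X"
  have "{y \<in> h ` X. c \<in> f y} = h ` {x \<in> X. c \<in> f (h x)}" for c by auto
  moreover have "card (h ` {x \<in> X. c \<in> f (h x)}) = card {x \<in> X. c \<in> f (h x)}" for c
    by (rule card_image) (rule inj_on_subset[OF inj], auto)
  ultimately show ?thesis by (simp add: zsum_def)
qed

lemma zsum_singletons [simp]: "zsum (\<lambda>x. {x}) X = X"
proof -
  have "{x \<in> X. c \<in> {x}} = (if c \<in> X then {c} else {})" for c by auto
  then show ?thesis by (simp add: zsum_def set_eq_iff)
qed

lemma zsum_singletons_image: "inj_on h X \<Longrightarrow> zsum (\<lambda>x. {h x}) X = h ` X"
  using zsum_image[of h X "\<lambda>y. {y}"] by simp

lemma image_zsum:
  assumes "inj h"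
  shows "h ` zsum f X = zsum (\<lambda>x. h ` f x) X"
proof (rule set_eqI)
  fix c
  show "c \<in> h ` zsum f X \<longleftrightarrow> c \<in> zsum (\<lambda>x. h ` f x) X"
  proof (cases "c \<in> range h")
    case True
    then obtain d where "c = h d" by blast
    then show ?thesis using assms by (simp add: zsum_def inj_image_mem_iff)
  next
    case False
    then have "{x \<in> X. c \<in> h ` f x} = {}" by blast
    with False show ?thesis by (auto simp: zsum_def simp del: Collect_empty_eq)
  qed
qed

lemma zsum_Times:
  "finite A \<Longrightarrow> finite B \<Longrightarrow> zsum f (A \<times> B) = zsum (\<lambda>a. zsum (\<lambda>b. f (a, b)) B) A"
  by (rule set_eq_coeffI) (simp add: coeff_zsum sum.cartesian_product)

lemma zsum_swap:
  "finite A \<Longrightarrow> finite B \<Longrightarrow>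
     zsum (\<lambda>a. zsum (\<lambda>b. f a b) B) A = zsum (\<lambda>b. zsum (\<lambda>a. f a b) A) B"
  by (rule set_eq_coeffI) (simp add: coeff_zsum sum.swap[of _ B])

lemma inj_append_left: "inj (\<lambda>w. u @ w)"
  by (simp add: inj_on_def)

lemma inj_append_right: "inj (\<lambda>w. w @ u)"
  by (simp add: inj_on_def)

lemma omult_singleton_left: "omult {u} Y = (\<lambda>w. u @ w) ` Y"
proof -
  have "{u} \<times> Y = (\<lambda>w. (u, w)) ` Y" by auto
  then show ?thesis
    by (simp add: omult_def zsum_image zsum_singletons_image inj_on_def)
qed

lemma omult_singleton_right: "omult X {w} = (\<lambda>u. u @ w) ` X"
proof -
  have "X \<times> {w} = (\<lambda>u. (u, w)) ` X" by auto
  then show ?thesis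
    by (simp add: omult_def zsum_image zsum_singletons_image inj_on_def)
qed

lemma omult_singletons [simp]: "omult {u} {w} = {u @ w}"
  by (simp add: omult_singleton_left)

lemma omult_empty [simp]: "omult {} Y = {}" "omult X {} = {}"
  by (simp_all add: omult_def)

lemma omult_eq_zsum: "finite X \<Longrightarrow> finite Y \<Longrightarrow> omult X Y = zsum (\<lambda>u. zsum (\<lambda>w. {u @ w}) Y) X"
  by (simp add: omult_def zsum_Times)

lemma finite_omult [simp]: "finite X \<Longrightarrow> finite Y \<Longrightarrow> finite (omult X Y)"
  by (simp add: omult_eq_zsum)

lemma omult_zsum_left:
  assumes "finite S" and "\<And>s. s \<in> S \<Longrightarrow> finite (f s)" and "finite Y"
  shows "omult (zsum f S) Y = zsum (\<lambda>s. omult (f s) Y) S"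
  using assms by (simp add: omult_eq_zsum zsum_zsum cong: zsum_cong)

lemma omult_zsum_right:
  assumes "finite S" and "\<And>s. s \<in> S \<Longrightarrow> finite (f s)" and "finite X"
  shows "omult X (zsum f S) = zsum (\<lambda>s. omult X (f s)) S"
proof -
  have "omult X (zsum f S) = zsum (\<lambda>u. zsum (\<lambda>s. zsum (\<lambda>w. {u @ w}) (f s)) S) X"
    using assms by (simp add: omult_eq_zsum zsum_zsum cong: zsum_cong)
  also have "\<dots> = zsum (\<lambda>s. omult X (f s)) S"
    using assms by (simp add: zsum_swap[of X S] omult_eq_zsum cong: zsum_cong)
  finally show ?thesis .
qed

lemma omult_zsum_pair_left:
  "finite S \<Longrightarrow> (\<And>p q. finite (f p q)) \<Longrightarrow> finite Y \<Longrightarrow>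
     omult (zsum (\<lambda>(p, q). f p q) S) Y = zsum (\<lambda>(p, q). omult (f p q) Y) S"
  by (subst omult_zsum_left) (simp_all add: split_def)

lemma omult_zsum_pair_right:
  "finite S \<Longrightarrow> (\<And>p q. finite (f p q)) \<Longrightarrow> finite X \<Longrightarrow>
     omult X (zsum (\<lambda>(p, q). f p q) S) = zsum (\<lambda>(p, q). omult X (f p q)) S"
  by (subst omult_zsum_right) (simp_all add: split_def)

lemma omult_singletons_zsum_left: "finite X \<Longrightarrow> finite Y \<Longrightarrow> zsum (\<lambda>u. omult {u} Y) X = omult X Y"
  using omult_zsum_left[of X "\<lambda>u. {u}" Y] by simp

lemma omult_singletons_zsum_right: "finite X \<Longrightarrow> finite Y \<Longrightarrow> zsum (\<lambda>w. omult X {w}) Y = omult X Y"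
  using omult_zsum_right[of Y "\<lambda>w. {w}" X] by simp

lemma omult_vadd_left:
  "finite A \<Longrightarrow> finite B \<Longrightarrow> finite Y \<Longrightarrow> omult (vadd A B) Y = vadd (omult A Y) (omult B Y)"
  by (simp add: omult_eq_zsum zsum_vadd_set)

lemma omult_vadd_right:
  "finite A \<Longrightarrow> finite B \<Longrightarrow> finite X \<Longrightarrow> omult X (vadd A B) = vadd (omult X A) (omult X B)"
  by (simp add: omult_eq_zsum zsum_vadd_set zsum_vadd)

lemma omult_assoc:
  assumes "finite X" and "finite Y" and "finite Z"
  shows "omult (omult X Y) Z = omult X (omult Y Z)"
proof -
  have "omult (omult X Y) Z = zsum (\<lambda>u. zsum (\<lambda>w. omult {u @ w} Z) Y) X"
    using assms by (simp add: omult_eq_zsum[of X Y] omult_zsum_left cong: zsum_cong)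
  also have "\<dots> = zsum (\<lambda>u. omult {u} (zsum (\<lambda>w. omult {w} Z) Y)) X"
    using assms by (simp add: omult_zsum_right omult_singleton_left image_zsum[OF inj_append_left] image_image)
  also have "\<dots> = omult X (omult Y Z)"
    using assms by (simp add: omult_singletons_zsum_left)
  finally show ?thesis .
qed

lemma omult_fixed_length_right:
  assumes "\<And>w. w \<in> Y \<Longrightarrow> length w = n"
  shows "omult X Y = (\<lambda>(u, w). u @ w) ` (X \<times> Y)"
proof -
  have "inj_on (\<lambda>(u, w). u @ w) (X \<times> Y)"
    using assms by (auto simp: inj_on_def append_eq_append_conv)
  then show ?thesis
    unfolding omult_def using zsum_singletons_image[of "\<lambda>(u, w). u @ w"] by (simp add: split_def)
qed

definition word1 :: "'b set \<Rightarrow> 'b list set" where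
  "word1 S = (\<lambda>c. [c]) ` S"

definition word2 :: "('b \<times> 'b) set \<Rightarrow> 'b list set" where
  "word2 S = (\<lambda>(x, y). [x, y]) ` S"

lemma word1_singleton [simp]: "word1 {c} = {[c]}"
  by (simp add: word1_def)

lemma finite_word1 [simp]: "finite S \<Longrightarrow> finite (word1 S)"
  by (simp add: word1_def)

lemma finite_word2 [simp]: "finite S \<Longrightarrow> finite (word2 S)"
  by (simp add: word2_def)

lemma word1_zsum: "word1 (zsum f S) = zsum (\<lambda>s. word1 (f s)) S"
  unfolding word1_def by (rule image_zsum) (simp add: inj_on_def)

lemma word1_vadd: "word1 (vadd A B) = vadd (word1 A) (word1 B)"
  unfolding word1_def by (rule image_vadd) (simp add: inj_on_def)

lemma word2_zsum: "word2 (zsum f S) = zsum (\<lambda>s. word2 (f s)) S"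
  unfolding word2_def by (rule image_zsum) (auto simp: inj_on_def)

lemma word2_vadd: "word2 (vadd A B) = vadd (word2 A) (word2 B)"
  unfolding word2_def by (rule image_vadd) (auto simp: inj_on_def)

lemma word2_Times: "word2 (A \<times> B) = omult (word1 A) (word1 B)"
  by (subst omult_fixed_length_right[where n = 1]) (auto simp: word1_def word2_def image_iff)

lemma finite_listset [simp]: "(\<And>A. A \<in> set As \<Longrightarrow> finite A) \<Longrightarrow> finite (listset As)"
proof (induction As)
  case (Cons A As)
  have "set_Cons A (listset As) = (\<lambda>(x, xs). x # xs) ` (A \<times> listset As)"
    by (auto simp: set_Cons_def)
  with Cons show ?case by simp
qed simp

lemma listset_singletons [simp]: "listset (map (\<lambda>b. {b}) y) = {y}"
  by (induction y) (auto simp: set_Cons_def)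

lemma listset_snoc: "listset (As @ [B]) = omult (listset As) (word1 B)"
proof -
  have "listset (As @ [B]) = (\<lambda>(u, w). u @ w) ` (listset As \<times> word1 B)"
    by (induction As) (auto simp: set_Cons_def word1_def image_iff)
  then show ?thesis
    by (subst omult_fixed_length_right[where n = 1]) (auto simp: word1_def)
qed

section \<open>Derivations of the tensor algebra\<close>

definition deriv_ext :: "('b \<Rightarrow> 'b list set) \<Rightarrow> 'b list \<Rightarrow> 'b list set" where
  "deriv_ext g w = zsum (\<lambda>k. subst_slot w k (g (w ! k))) {..<length w}"

lemma subst_slot_zsum: "subst_slot w k (zsum f S) = zsum (\<lambda>s. subst_slot w k (f s)) S"
  unfolding subst_slot_def by (rule image_zsum) (simp add: inj_on_def)

lemma subst_slot_vadd: "subst_slot w k (vadd A B) = vadd (subst_slot w k A) (subst_slot w k B)"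
  unfolding subst_slot_def by (rule image_vadd) (simp add: inj_on_def)

lemma deriv_ext_Nil [simp]: "deriv_ext g [] = {}"
  by (simp add: deriv_ext_def)

lemma deriv_ext_singleton [simp]: "deriv_ext g [a] = g a"
  by (simp add: deriv_ext_def subst_slot_def lessThan_Suc)

lemma finite_deriv_ext [simp]: "(\<And>a. finite (g a)) \<Longrightarrow> finite (deriv_ext g w)"
  by (simp add: deriv_ext_def subst_slot_def)

lemma lessThan_add_eq_Un: "{..<m + n} = {..<m} \<union> (\<lambda>j. m + j) ` {..<n :: nat}"
proof -
  have "x \<in> (\<lambda>j. m + j) ` {..<n}" if "m \<le> x" "x < m + n" for x
    using that by (intro image_eqI[of _ _ "x - m"]) auto
  then show ?thesis by (auto simp: not_less[symmetric])
qed

lemma deriv_ext_append: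
  assumes "\<And>a. finite (g a)"
  shows "deriv_ext g (u @ w) = vadd (omult {u} (deriv_ext g w)) (omult (deriv_ext g u) {w})"
proof -
  let ?f = "\<lambda>k. subst_slot (u @ w) k (g ((u @ w) ! k))"
  have "deriv_ext g (u @ w) = vadd (zsum ?f {..<length u}) (zsum ?f ((\<lambda>j. length u + j) ` {..<length w}))"
    unfolding deriv_ext_def length_append lessThan_add_eq_Un
    using assms by (intro zsum_Un_disjoint) (auto simp: subst_slot_def)
  also have "zsum ?f {..<length u} = (\<lambda>z. z @ w) ` deriv_ext g u"
    unfolding deriv_ext_def image_zsum[OF inj_append_right]
    by (rule zsum_cong) (simp add: subst_slot_def image_image nth_append)
  also have "zsum ?f ((\<lambda>j. length u + j) ` {..<length w}) = (\<lambda>z. u @ z) ` deriv_ext g w"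
    unfolding deriv_ext_def image_zsum[OF inj_append_left]
    by (simp add: zsum_image subst_slot_def image_image nth_append)
  finally show ?thesis
    by (simp add: omult_singleton_left omult_singleton_right vadd_commute)
qed

section \<open>Connected DG-bialgebras\<close>

locale conn_dg_bialg =
  fixes deg :: "'b \<Rightarrow> nat" and e :: 'b and eps :: "'b \<Rightarrow> bool"
    and dA :: "'b \<Rightarrow> 'b set" and cop :: "'b \<Rightarrow> ('b \<times> 'b) set" and mu :: "'b \<Rightarrow> 'b \<Rightarrow> 'b set"
  assumes conn_dg_bialgebra: "conn_dg_bialgebra deg e eps dA cop mu"
begin

lemma finite_dA [simp]: "finite (dA b)"
  using conn_dg_bialgebra by (simp add: conn_dg_bialgebra_def)

lemma finite_cop [simp]: "finite (cop b)"
  using conn_dg_bialgebra by (simp add: conn_dg_bialgebra_def)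

lemma finite_mu [simp]: "finite (mu a b)"
  using conn_dg_bialgebra by (simp add: conn_dg_bialgebra_def)

lemma deg_cop: "(x, y) \<in> cop b \<Longrightarrow> deg x + deg y = deg b"
  using conn_dg_bialgebra by (simp add: conn_dg_bialgebra_def)

lemma deg_mu: "c \<in> mu a b \<Longrightarrow> deg c = deg a + deg b"
  using conn_dg_bialgebra by (simp add: conn_dg_bialgebra_def)

lemma deg_eq_0_iff: "deg b = 0 \<longleftrightarrow> b = e"
  using conn_dg_bialgebra by (simp add: conn_dg_bialgebra_def)

lemma coassoc:
  "zsum (\<lambda>(x, y). (\<lambda>(x1, x2). (x1, x2, y)) ` cop x) (cop b)
     = zsum (\<lambda>(x, y). (\<lambda>(y1, y2). (x, y1, y2)) ` cop y) (cop b)"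
  using conn_dg_bialgebra by (simp add: conn_dg_bialgebra_def)

lemma counit_left: "zsum (\<lambda>(x, y). if eps x then {y} else {}) (cop b) = {b}"
  using conn_dg_bialgebra by (simp add: conn_dg_bialgebra_def)

lemma counit_right: "zsum (\<lambda>(x, y). if eps y then {x} else {}) (cop b) = {b}"
  using conn_dg_bialgebra by (simp add: conn_dg_bialgebra_def)

lemma cop_dA:
  "zsum cop (dA b) = zsum (\<lambda>(x, y). vadd ((\<lambda>x'. (x', y)) ` dA x) ((\<lambda>y'. (x, y')) ` dA y)) (cop b)"
  using conn_dg_bialgebra by (simp add: conn_dg_bialgebra_def)

lemma eps_vec_dA: "\<not> eps_vec eps (dA b)"
  using conn_dg_bialgebra by (simp add: conn_dg_bialgebra_def)

lemma mu_unit_left [simp]: "mu e b = {b}"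
  using conn_dg_bialgebra by (simp add: conn_dg_bialgebra_def)

lemma mu_unit_right [simp]: "mu b e = {b}"
  using conn_dg_bialgebra by (simp add: conn_dg_bialgebra_def)

lemma dA_mu: "zsum dA (mu a b) = vadd (zsum (\<lambda>c. mu c b) (dA a)) (zsum (mu a) (dA b))"
  using conn_dg_bialgebra by (simp add: conn_dg_bialgebra_def)

lemma cop_mu:
  "zsum cop (mu a b) = zsum (\<lambda>((a1, a2), (b1, b2)). mu a1 b1 \<times> mu a2 b2) (cop a \<times> cop b)"
  using conn_dg_bialgebra by (simp add: conn_dg_bialgebra_def)

lemma unit_notin_mu: "b \<noteq> e \<Longrightarrow> e \<notin> mu a b"
  using deg_mu[of e a b] deg_eq_0_iff[of e] deg_eq_0_iff[of b] by auto

lemma cop_unit: "cop e = {(e, e)}"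
proof -
  have "x = e \<and> y = e" if "(x, y) \<in> cop e" for x y
    using deg_cop[OF that] deg_eq_0_iff by (metis add_is_0)
  then have "cop e \<subseteq> {(e, e)}" by auto
  moreover have "cop e \<noteq> {}"
    using counit_left[of e] by auto
  ultimately show ?thesis by blast
qed

lemma eps_unit: "eps e"
  using counit_left[of e] by (simp add: cop_unit split: if_splits)

lemma zsum_coassoc:
  "zsum (\<lambda>(u, w). zsum (\<lambda>(p, q). G p q w) (cop u)) (cop x)
     = zsum (\<lambda>(p, u). zsum (\<lambda>(q, w). G p q w) (cop u)) (cop x)"
proof -
  let ?G = "\<lambda>(p, q, w). G p q w"
  have "zsum ?G ((\<lambda>(p, q). (p, q, w)) ` cop u) = zsum (\<lambda>(p, q). G p q w) (cop u)" for u w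
    by (subst zsum_image) (auto simp: inj_on_def intro!: zsum_cong split: prod.split)
  then have "zsum (\<lambda>(u, w). zsum (\<lambda>(p, q). G p q w) (cop u)) (cop x)
      = zsum ?G (zsum (\<lambda>(u, w). (\<lambda>(p, q). (p, q, w)) ` cop u) (cop x))"
    by (simp add: zsum_zsum_pair)
  also have "\<dots> = zsum ?G (zsum (\<lambda>(p, u). (\<lambda>(q, w). (p, q, w)) ` cop u) (cop x))"
    by (simp only: coassoc)
  also have "zsum ?G ((\<lambda>(q, w). (p, q, w)) ` cop u) = zsum (\<lambda>(q, w). G p q w) (cop u)" for p u
    by (subst zsum_image) (auto simp: inj_on_def intro!: zsum_cong split: prod.split)
  then have "zsum ?G (zsum (\<lambda>(p, u). (\<lambda>(q, w). (p, q, w)) ` cop u) (cop x))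
      = zsum (\<lambda>(p, u). zsum (\<lambda>(q, w). G p q w) (cop u)) (cop x)"
    by (simp add: zsum_zsum_pair)
  finally show ?thesis .
qed

lemma itdiag_Suc:
  "itdiag eps cop (Suc n) a = zsum (\<lambda>(x, y). (\<lambda>l. l @ [y]) ` itdiag eps cop n x) (cop a)"
proof (cases n)
  case 0
  have "zsum (\<lambda>(x, y). (\<lambda>l. l @ [y]) ` itdiag eps cop 0 x) (cop a)
      = (\<lambda>y. [y]) ` zsum (\<lambda>(x, y). if eps x then {y} else {}) (cop a)"
    by (subst image_zsum) (simp_all add: inj_on_def, rule zsum_cong, simp split: prod.split)
  with 0 show ?thesis by (simp add: counit_left)
qed simp

lemma finite_itdiag [simp]: "finite (itdiag eps cop n a)"
  by (induction n arbitrary: a)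
    (auto simp: itdiag_Suc split: prod.split simp del: itdiag.simps(3) intro!: finite_zsum)

lemma length_itdiag: "cs \<in> itdiag eps cop n a \<Longrightarrow> length cs = n"
proof (induction n arbitrary: a cs)
  case (Suc n)
  then obtain x y l where "cs = l @ [y]" "l \<in> itdiag eps cop n x"
    using zsum_subset by (fastforce simp: itdiag_Suc simp del: itdiag.simps)
  with Suc.IH show ?case by simp
qed (simp split: if_splits)

lemma itdiag_unit: "itdiag eps cop n e = {replicate n e}"
  by (induction n) (simp_all add: itdiag_Suc eps_unit cop_unit replicate_append_same del: itdiag.simps(3))

text \<open>\<open>cup1_letter a w\<close> is [a] cup_1 w.\<close>

definition cup1_letter :: "'b \<Rightarrow> 'b list \<Rightarrow> 'b list set" where
  "cup1_letter x y = zsum (\<lambda>cs. listset (map2 mu cs y)) (itdiag eps cop (length y) x)"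

lemma finite_listset_map2_mu [simp]: "finite (listset (map2 mu cs y))"
  by (rule finite_listset) (auto simp: set_zip)

lemma finite_cup1_letter [simp]: "finite (cup1_letter x y)"
  by (simp add: cup1_letter_def)

lemma cup1_letter_Nil: "cup1_letter x [] = (if eps x then {[]} else {})"
  by (simp add: cup1_letter_def)

lemma cup1_letter_unit: "cup1_letter e y = {y}"
proof -
  have "map2 mu (replicate (length y) e) y = map (\<lambda>b. {b}) y"
    by (induction y) simp_all
  then show ?thesis by (simp add: cup1_letter_def itdiag_unit)
qed

lemma cup1_letter_snoc:
  "cup1_letter x (y @ [b]) = zsum (\<lambda>(p, q). omult (cup1_letter p y) (word1 (mu q b))) (cop x)"
proof -
  let ?G = "\<lambda>cs. listset (map2 mu cs (y @ [b]))"
  have "cup1_letter x (y @ [b])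
      = zsum (\<lambda>(p, q). zsum ?G ((\<lambda>l. l @ [q]) ` itdiag eps cop (length y) p)) (cop x)"
    by (simp add: cup1_letter_def itdiag_Suc zsum_zsum split_def del: itdiag.simps)
  also have "\<dots> = zsum (\<lambda>(p, q). omult (cup1_letter p y) (word1 (mu q b))) (cop x)"
  proof (rule zsum_cong_pair)
    fix p q
    have "zsum ?G ((\<lambda>l. l @ [q]) ` itdiag eps cop (length y) p)
        = zsum (\<lambda>l. omult (listset (map2 mu l y)) (word1 (mu q b))) (itdiag eps cop (length y) p)"
      by (auto simp: zsum_image inj_on_def listset_snoc length_itdiag intro!: zsum_cong)
    also have "\<dots> = omult (cup1_letter p y) (word1 (mu q b))"
      unfolding cup1_letter_def by (rule omult_zsum_left[symmetric]) simp_all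
    finally show "zsum ?G ((\<lambda>l. l @ [q]) ` itdiag eps cop (length y) p)
        = omult (cup1_letter p y) (word1 (mu q b))" .
  qed
  finally show ?thesis .
qed

lemma cup1_word_eq_deriv_ext: "cup1_word eps cop mu u w = deriv_ext (\<lambda>a. cup1_letter a w) u"
  unfolding cup1_word_def deriv_ext_def cup1_letter_def by (simp add: subst_slot_zsum)

section \<open>The cobar differential\<close>

abbreviation dO :: "'b list set \<Rightarrow> 'b list set" where
  "dO \<equiv> dOmega e dA cop"

abbreviation dOw :: "'b list \<Rightarrow> 'b list set" where
  "dOw \<equiv> dOmega_word e dA cop"

lemma dOmega_word_eq_deriv_ext:
  "dOw w = deriv_ext (\<lambda>a. vadd (word1 (dA a)) (word2 (red_cop cop e a))) w"
  unfolding dOmega_word_def deriv_ext_def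
  by (rule zsum_cong) (simp add: subst_slot_vadd word1_def word2_def)

lemma finite_dOmega_word [simp]: "finite (dOw w)"
  by (simp add: dOmega_word_eq_deriv_ext red_cop_def)

lemma finite_dOmega [simp]: "finite X \<Longrightarrow> finite (dO X)"
  by (simp add: dOmega_def)

lemma dOmega_word_Nil [simp]: "dOw [] = {}"
  by (simp add: dOmega_word_def)

lemma dOmega_empty [simp]: "dO {} = {}"
  by (simp add: dOmega_def)

lemma dOmega_singleton [simp]: "dO {w} = dOw w"
  by (simp add: dOmega_def)

lemma dOmega_zsum:
  "finite S \<Longrightarrow> (\<And>s. s \<in> S \<Longrightarrow> finite (f s)) \<Longrightarrow> dO (zsum f S) = zsum (\<lambda>s. dO (f s)) S"
  unfolding dOmega_def by (rule zsum_zsum)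

lemma dOmega_zsum_pair:
  "finite S \<Longrightarrow> (\<And>p q. finite (f p q)) \<Longrightarrow>
     dO (zsum (\<lambda>(p, q). f p q) S) = zsum (\<lambda>(p, q). dO (f p q)) S"
  unfolding dOmega_def by (rule zsum_zsum_pair)

lemma dOmega_vadd: "finite A \<Longrightarrow> finite B \<Longrightarrow> dO (vadd A B) = vadd (dO A) (dO B)"
  unfolding dOmega_def by (rule zsum_vadd_set)

lemma dOmega_word_append: "dOw (u @ w) = vadd (omult {u} (dOw w)) (omult (dOw u) {w})"
  unfolding dOmega_word_eq_deriv_ext by (rule deriv_ext_append) (simp add: red_cop_def)

lemma dOmega_omult:
  assumes "finite X" and "finite Y"
  shows "dO (omult X Y) = vadd (omult X (dO Y)) (omult (dO X) Y)"
proof -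
  have "dO (omult X Y) = zsum (\<lambda>u. zsum (\<lambda>w. vadd (omult {u} (dOw w)) (omult (dOw u) {w})) Y) X"
    using assms by (simp add: omult_eq_zsum dOmega_zsum dOmega_word_append)
  also have "\<dots> = zsum (\<lambda>u. vadd (omult {u} (dO Y)) (omult (dOw u) Y)) X"
    using assms by (simp add: zsum_vadd dOmega_def omult_zsum_right omult_singletons_zsum_right)
  also have "\<dots> = vadd (omult X (dO Y)) (omult (dO X) Y)"
    using assms by (simp add: zsum_vadd omult_singletons_zsum_left dOmega_def omult_zsum_left)
  finally show ?thesis .
qed

text \<open>Since d_2 uses the reduced diagonal, writing it with the full diagonal leaves the
  correction words [c, e] and [e, c].\<close>

lemma dOmega_word1:
  assumes "finite V" and "e \<notin> V"
  shows "dO (word1 V) = vadd (vadd (word1 (zsum dA V)) (word2 (zsum cop V)))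
                              (vadd (omult (word1 V) {[e]}) (omult {[e]} (word1 V)))"
proof -
  have "word1 V = zsum (\<lambda>c. {[c]}) V"
    unfolding word1_def by (rule zsum_singletons_image[symmetric]) (simp add: inj_on_def)
  moreover have "word2 (red_cop cop e c) = vadd (word2 (cop c)) (vadd {[c, e]} {[e, c]})" if "c \<in> V" for c
    using that assms by (auto simp: red_cop_def word2_vadd word2_def vadd_def)
  ultimately have "dO (word1 V)
      = zsum (\<lambda>c. vadd (word1 (dA c)) (vadd (word2 (cop c)) (vadd {[c, e]} {[e, c]}))) V"
    using assms by (simp add: dOmega_zsum dOmega_word_eq_deriv_ext cong: zsum_cong)
  moreover have "omult (word1 V) {[e]} = zsum (\<lambda>c. {[c, e]}) V"
    by (simp add: zsum_singletons_image inj_on_def omult_singleton_right word1_def image_image)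
  moreover have "omult {[e]} (word1 V) = zsum (\<lambda>c. {[e, c]}) V"
    by (simp add: zsum_singletons_image inj_on_def omult_singleton_left word1_def image_image)
  ultimately show ?thesis
    using assms by (simp add: zsum_vadd word1_zsum word2_zsum vadd_assoc)
qed

lemma dOmega_word1_mu:
  assumes "b \<noteq> e"
  shows "dO (word1 (mu q b)) =
    vadd (vadd (vadd (zsum (\<lambda>c. word1 (mu c b)) (dA q)) (zsum (\<lambda>c. word1 (mu q c)) (dA b)))
               (zsum (\<lambda>((a1, a2), (b1, b2)). omult (word1 (mu a1 b1)) (word1 (mu a2 b2))) (cop q \<times> cop b)))
         (vadd (omult (word1 (mu q b)) {[e]}) (omult {[e]} (word1 (mu q b))))"
proof -
  have "word2 (zsum cop (mu q b))
      = zsum (\<lambda>((a1, a2), (b1, b2)). omult (word1 (mu a1 b1)) (word1 (mu a2 b2))) (cop q \<times> cop b)"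
    by (simp only: cop_mu word2_zsum) (auto simp: word2_Times intro!: zsum_cong)
  then show ?thesis
    using assms by (simp add: dOmega_word1 unit_notin_mu dA_mu word1_vadd word1_zsum)
qed

section \<open>The differential of a letter cup-1 a word\<close>

text \<open>The expected value of d([x] cup_1 y), written with the full diagonal of x. It is
  needed for every letter x, the unit e included, since the induction on y applies it to
  the tensor factors of diagonals.\<close>

definition cup1_letter_bd :: "'b \<Rightarrow> 'b list \<Rightarrow> 'b list set" where
  "cup1_letter_bd x y =
     vadd (vadd (zsum (\<lambda>x'. cup1_letter x' y) (dA x))
                (zsum (\<lambda>(p, q). vadd (omult (cup1_letter p y) {[q]}) (omult {[p]} (cup1_letter q y))) (cop x)))
          (vadd (vadd (omult (cup1_letter x y) {[e]}) (omult {[e]} (cup1_letter x y)))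
                (zsum (cup1_letter x) (dOw y)))"

lemma dOmega_cup1_letter_Nil: "dO (cup1_letter x []) = cup1_letter_bd x []"
proof -
  have "{x' \<in> dA x. c \<in> cup1_letter x' []} = (if c = [] then {x' \<in> dA x. eps x'} else {})" for c
    by (auto simp: cup1_letter_Nil)
  then have "zsum (\<lambda>x'. cup1_letter x' []) (dA x) = {}"
    using eps_vec_dA[of x] by (auto simp: zsum_def eps_vec_def)
  moreover have "zsum (\<lambda>(p, q). omult (cup1_letter p []) {[q]}) (cop x) = {[x]}"
  proof -
    have "zsum (\<lambda>(p, q). omult (cup1_letter p []) {[q]}) (cop x)
        = word1 (zsum (\<lambda>(p, q). if eps p then {q} else {}) (cop x))"
      by (simp add: word1_zsum, rule zsum_cong) (simp add: cup1_letter_Nil word1_def split: prod.split)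
    then show ?thesis by (simp add: counit_left)
  qed
  moreover have "zsum (\<lambda>(p, q). omult {[p]} (cup1_letter q [])) (cop x) = {[x]}"
  proof -
    have "zsum (\<lambda>(p, q). omult {[p]} (cup1_letter q [])) (cop x)
        = word1 (zsum (\<lambda>(p, q). if eps q then {p} else {}) (cop x))"
      by (simp add: word1_zsum, rule zsum_cong) (simp add: cup1_letter_Nil word1_def split: prod.split)
    then show ?thesis by (simp add: counit_right)
  qed
  ultimately show ?thesis
    by (simp add: cup1_letter_bd_def zsum_vadd_pair cup1_letter_Nil)
qed

lemma cup1_letter_snoc_unit: "cup1_letter x (y @ [e]) = zsum (\<lambda>(p, q). omult (cup1_letter p y) {[q]}) (cop x)"
  by (simp add: cup1_letter_snoc)

lemma cup1_letter_snoc2: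
  "cup1_letter x (y @ [b1, b2]) = zsum (\<lambda>(p, u). zsum (\<lambda>(q, w).
     omult (omult (cup1_letter p y) (word1 (mu q b1))) (word1 (mu w b2))) (cop u)) (cop x)"
proof -
  have "cup1_letter x ((y @ [b1]) @ [b2]) = zsum (\<lambda>(u, w). zsum (\<lambda>(p, q).
     omult (omult (cup1_letter p y) (word1 (mu q b1))) (word1 (mu w b2))) (cop u)) (cop x)"
    by (simp only: cup1_letter_snoc) (rule zsum_cong_pair, simp add: cup1_letter_snoc omult_zsum_pair_left)
  then show ?thesis by (simp add: zsum_coassoc)
qed

lemma zsum_dA_cup1_letter_snoc:
  "zsum (\<lambda>x'. cup1_letter x' (y @ [b])) (dA x)
     = vadd (zsum (\<lambda>(p, q). omult (zsum (\<lambda>x'. cup1_letter x' y) (dA p)) (word1 (mu q b))) (cop x))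
            (zsum (\<lambda>(p, q). omult (cup1_letter p y) (zsum (\<lambda>c. word1 (mu c b)) (dA q))) (cop x))"
proof -
  let ?g = "\<lambda>(p, q). omult (cup1_letter p y) (word1 (mu q b))"
  have "zsum (\<lambda>x'. cup1_letter x' (y @ [b])) (dA x) = zsum ?g (zsum cop (dA x))"
    by (simp add: cup1_letter_snoc zsum_zsum)
  also have "\<dots> = zsum (\<lambda>(u, w). vadd (zsum ?g ((\<lambda>x'. (x', w)) ` dA u)) (zsum ?g ((\<lambda>y'. (u, y')) ` dA w))) (cop x)"
    by (simp add: cop_dA zsum_zsum_pair zsum_vadd_set)
  also have "\<dots> = vadd (zsum (\<lambda>(p, q). omult (zsum (\<lambda>x'. cup1_letter x' y) (dA p)) (word1 (mu q b))) (cop x))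
            (zsum (\<lambda>(p, q). omult (cup1_letter p y) (zsum (\<lambda>c. word1 (mu c b)) (dA q))) (cop x))"
    by (simp add: zsum_vadd_pair zsum_image inj_on_def omult_zsum_left omult_zsum_right)
  finally show ?thesis .
qed

lemma zsum_cop_cup1_letter_snoc:
  "zsum (\<lambda>(p, q). omult {[p]} (cup1_letter q (y @ [b]))) (cop x)
     = zsum (\<lambda>(p, q). omult (zsum (\<lambda>(p1, p2). omult {[p1]} (cup1_letter p2 y)) (cop p)) (word1 (mu q b))) (cop x)"
proof -
  have "zsum (\<lambda>(p, q). omult {[p]} (cup1_letter q (y @ [b]))) (cop x)
     = zsum (\<lambda>(p, u). zsum (\<lambda>(q, w). omult {[p]} (omult (cup1_letter q y) (word1 (mu w b)))) (cop u)) (cop x)"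
    by (rule zsum_cong_pair) (simp add: cup1_letter_snoc omult_zsum_pair_right)
  also have "\<dots> = zsum (\<lambda>(u, w). zsum (\<lambda>(p, q). omult {[p]} (omult (cup1_letter q y) (word1 (mu w b)))) (cop u)) (cop x)"
    by (rule zsum_coassoc[symmetric])
  also have "\<dots> = zsum (\<lambda>(p, q). omult (zsum (\<lambda>(p1, p2). omult {[p1]} (cup1_letter p2 y)) (cop p)) (word1 (mu q b))) (cop x)"
    by (rule zsum_cong_pair) (simp add: omult_zsum_pair_left omult_assoc)
  finally show ?thesis .
qed

lemma zsum_cup1_letter_snoc_dOmega_prefix:
  "zsum (cup1_letter x) (omult (dOw y) {[b]})
     = zsum (\<lambda>(p, q). omult (zsum (cup1_letter p) (dOw y)) (word1 (mu q b))) (cop x)"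
proof -
  have "zsum (cup1_letter x) (omult (dOw y) {[b]})
      = zsum (\<lambda>u. zsum (\<lambda>(p, q). omult (cup1_letter p u) (word1 (mu q b))) (cop x)) (dOw y)"
    by (simp add: omult_singleton_right zsum_image inj_on_def cup1_letter_snoc)
  also have "\<dots> = zsum (\<lambda>(p, q). omult (zsum (cup1_letter p) (dOw y)) (word1 (mu q b))) (cop x)"
    unfolding split_def by (subst zsum_swap) (simp_all add: omult_zsum_left)
  finally show ?thesis .
qed

lemma zsum_cup1_letter_snoc_dA_last:
  "zsum (cup1_letter x) (omult {y} (word1 (dA b)))
     = zsum (\<lambda>(p, q). omult (cup1_letter p y) (zsum (\<lambda>c. word1 (mu q c)) (dA b))) (cop x)"
proof -
  have "zsum (cup1_letter x) (omult {y} (word1 (dA b)))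
      = zsum (\<lambda>c. zsum (\<lambda>(p, q). omult (cup1_letter p y) (word1 (mu q c))) (cop x)) (dA b)"
    by (simp add: omult_singleton_left word1_def image_image zsum_image inj_on_def cup1_letter_snoc)
  also have "\<dots> = zsum (\<lambda>(p, q). omult (cup1_letter p y) (zsum (\<lambda>c. word1 (mu q c)) (dA b))) (cop x)"
    unfolding split_def by (subst zsum_swap) (simp_all add: omult_zsum_right)
  finally show ?thesis .
qed

lemma zsum_cup1_letter_snoc_cop_last:
  "zsum (cup1_letter x) (omult {y} (word2 (cop b)))
     = zsum (\<lambda>(p, q). omult (cup1_letter p y)
         (zsum (\<lambda>((a1, a2), (b1, b2)). omult (word1 (mu a1 b1)) (word1 (mu a2 b2))) (cop q \<times> cop b))) (cop x)"
proof -
  let ?m = "\<lambda>q w b1 b2. omult (word1 (mu q b1)) (word1 (mu w b2))"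
  have "zsum (cup1_letter x) (omult {y} (word2 (cop b)))
      = zsum (\<lambda>(b1, b2). cup1_letter x (y @ [b1, b2])) (cop b)"
    by (simp add: omult_singleton_left word2_def image_image zsum_image inj_on_def prod_eq_iff split_def)
  also have "\<dots> = zsum (\<lambda>(b1, b2). zsum (\<lambda>(p, u).
      omult (cup1_letter p y) (zsum (\<lambda>(q, w). ?m q w b1 b2) (cop u))) (cop x)) (cop b)"
    by (simp add: cup1_letter_snoc2 omult_assoc omult_zsum_pair_right)
  also have "\<dots> = zsum (\<lambda>(p, u). omult (cup1_letter p y)
      (zsum (\<lambda>(b1, b2). zsum (\<lambda>(q, w). ?m q w b1 b2) (cop u)) (cop b))) (cop x)"
    unfolding split_def by (subst zsum_swap) (simp_all add: omult_zsum_right)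
  also have "\<dots> = zsum (\<lambda>(p, q). omult (cup1_letter p y)
         (zsum (\<lambda>((a1, a2), (b1, b2)). omult (word1 (mu a1 b1)) (word1 (mu a2 b2))) (cop q \<times> cop b))) (cop x)"
    unfolding split_def by (simp add: zsum_Times zsum_swap[of "cop _" "cop b"])
  finally show ?thesis .
qed

lemma dOmega_word_snoc:
  assumes "b \<noteq> e"
  shows "dOw (y @ [b]) = vadd (omult {y} (vadd (vadd (word1 (dA b)) (word2 (cop b))) (vadd {[b, e]} {[e, b]})))
                             (omult (dOw y) {[b]})"
proof -
  have "dOw [b] = vadd (vadd (word1 (dA b)) (word2 (cop b))) (vadd {[b, e]} {[e, b]})"
    using dOmega_word1[of "{b}"] assms by simp
  then show ?thesis by (simp add: dOmega_word_append)
qed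

lemma zsum_cup1_letter_dOmega_word_snoc:
  assumes "b \<noteq> e"
  shows "zsum (cup1_letter x) (dOw (y @ [b])) =
    vadd (vadd (vadd (zsum (\<lambda>(p, q). omult (cup1_letter p y) (zsum (\<lambda>c. word1 (mu q c)) (dA b))) (cop x))
                     (zsum (\<lambda>(p, q). omult (cup1_letter p y)
                        (zsum (\<lambda>((a1, a2), (b1, b2)). omult (word1 (mu a1 b1)) (word1 (mu a2 b2))) (cop q \<times> cop b))) (cop x)))
               (vadd (zsum (\<lambda>(p, q). omult (cup1_letter p (y @ [b])) {[q]}) (cop x))
                     (zsum (\<lambda>(p, q). omult (zsum (\<lambda>(p1, p2). omult (cup1_letter p1 y) {[p2]}) (cop p)) (word1 (mu q b))) (cop x))))
         (zsum (\<lambda>(p, q). omult (zsum (cup1_letter p) (dOw y)) (word1 (mu q b))) (cop x))"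
proof -
  have "cup1_letter x (y @ [e, b])
      = zsum (\<lambda>(p, q). omult (zsum (\<lambda>(p1, p2). omult (cup1_letter p1 y) {[p2]}) (cop p)) (word1 (mu q b))) (cop x)"
    using cup1_letter_snoc[of x "y @ [e]" b] by (simp add: cup1_letter_snoc_unit)
  moreover have "cup1_letter x (y @ [b, e]) = zsum (\<lambda>(p, q). omult (cup1_letter p (y @ [b])) {[q]}) (cop x)"
    using cup1_letter_snoc_unit[of x "y @ [b]"] by simp
  ultimately show ?thesis
    using assms
    by (simp add: dOmega_word_snoc omult_vadd_right zsum_vadd_set zsum_cup1_letter_snoc_dA_last
        zsum_cup1_letter_snoc_cop_last zsum_cup1_letter_snoc_dOmega_prefix vadd_assoc)
qed

lemma dOmega_cup1_letter_snoc:
  assumes IH: "\<And>x. dO (cup1_letter x y) = cup1_letter_bd x y" and b: "b \<noteq> e"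
  shows "dO (cup1_letter x (y @ [b])) = cup1_letter_bd x (y @ [b])"
proof -
  txt \<open>The terms of d([x] cup_1 (y @ [b])) = \<Sum>_{(p,q) \<in> Delta x} ([p] cup_1 y) d[q b] + d([p] cup_1 y) [q b]:
    T1, ..., T5 from d[q b], T6, ..., T11 from d([p] cup_1 y). Comparing with the pieces of
    the right-hand side, only T5 = T9 and two copies of R are left over, and they cancel.\<close>
  define T1 where "T1 = zsum (\<lambda>(p, q). omult (cup1_letter p y) (zsum (\<lambda>c. word1 (mu c b)) (dA q))) (cop x)"
  define T2 where "T2 = zsum (\<lambda>(p, q). omult (cup1_letter p y) (zsum (\<lambda>c. word1 (mu q c)) (dA b))) (cop x)"
  define T3 where "T3 = zsum (\<lambda>(p, q). omult (cup1_letter p y)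
    (zsum (\<lambda>((a1, a2), (b1, b2)). omult (word1 (mu a1 b1)) (word1 (mu a2 b2))) (cop q \<times> cop b))) (cop x)"
  define T4 where "T4 = zsum (\<lambda>(p, q). omult (cup1_letter p y) (omult (word1 (mu q b)) {[e]})) (cop x)"
  define T5 where "T5 = zsum (\<lambda>(p, q). omult (cup1_letter p y) (omult {[e]} (word1 (mu q b)))) (cop x)"
  define T6 where "T6 = zsum (\<lambda>(p, q). omult (zsum (\<lambda>x'. cup1_letter x' y) (dA p)) (word1 (mu q b))) (cop x)"
  define T7 where "T7 = zsum (\<lambda>(p, q). omult (zsum (\<lambda>(p1, p2). omult (cup1_letter p1 y) {[p2]}) (cop p)) (word1 (mu q b))) (cop x)"
  define T8 where "T8 = zsum (\<lambda>(p, q). omult (zsum (\<lambda>(p1, p2). omult {[p1]} (cup1_letter p2 y)) (cop p)) (word1 (mu q b))) (cop x)"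
  define T9 where "T9 = zsum (\<lambda>(p, q). omult (omult (cup1_letter p y) {[e]}) (word1 (mu q b))) (cop x)"
  define T10 where "T10 = zsum (\<lambda>(p, q). omult (omult {[e]} (cup1_letter p y)) (word1 (mu q b))) (cop x)"
  define T11 where "T11 = zsum (\<lambda>(p, q). omult (zsum (cup1_letter p) (dOw y)) (word1 (mu q b))) (cop x)"
  define R where "R = zsum (\<lambda>(p, q). omult (cup1_letter p (y @ [b])) {[q]}) (cop x)"
  have finite_cop_mu: "finite (zsum (\<lambda>((a1, a2), (b1, b2)). omult (word1 (mu a1 b1)) (word1 (mu a2 b2))) (cop q \<times> cop b))"
    for q by (rule finite_zsum) (auto split: prod.split)
  have "dO (cup1_letter x (y @ [b])) = zsum (\<lambda>(p, q). vadd (omult (cup1_letter p y) (dO (word1 (mu q b))))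
                                                            (omult (cup1_letter_bd p y) (word1 (mu q b)))) (cop x)"
    by (simp add: cup1_letter_snoc dOmega_zsum_pair dOmega_omult IH)
  also have "\<dots> = vadd (vadd (vadd (vadd T1 T2) T3) (vadd T4 T5)) (vadd (vadd T6 (vadd T7 T8)) (vadd (vadd T9 T10) T11))"
    unfolding T1_def T2_def T3_def T4_def T5_def T6_def T7_def T8_def T9_def T10_def T11_def
    using b finite_cop_mu by (simp add: dOmega_word1_mu cup1_letter_bd_def omult_vadd_left omult_vadd_right zsum_vadd_pair)
  finally have lhs: "dO (cup1_letter x (y @ [b])) = \<dots>" .
  have "zsum (\<lambda>x'. cup1_letter x' (y @ [b])) (dA x) = vadd T6 T1"
    unfolding T6_def T1_def by (rule zsum_dA_cup1_letter_snoc)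
  moreover have "zsum (\<lambda>(p, q). vadd (omult (cup1_letter p (y @ [b])) {[q]}) (omult {[p]} (cup1_letter q (y @ [b])))) (cop x)
      = vadd R T8"
    unfolding R_def T8_def by (simp add: zsum_vadd_pair zsum_cop_cup1_letter_snoc)
  moreover have "omult (cup1_letter x (y @ [b])) {[e]} = T4"
    unfolding T4_def by (simp add: cup1_letter_snoc omult_zsum_pair_left omult_assoc)
  moreover have "omult {[e]} (cup1_letter x (y @ [b])) = T10"
    unfolding T10_def by (simp add: cup1_letter_snoc omult_zsum_pair_right omult_assoc)
  moreover have "zsum (cup1_letter x) (dOw (y @ [b])) = vadd (vadd (vadd T2 T3) (vadd R T7)) T11"
    unfolding T2_def T3_def R_def T7_def T11_def using b by (rule zsum_cup1_letter_dOmega_word_snoc)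
  moreover have "T9 = T5"
    unfolding T9_def T5_def by (rule zsum_cong_pair) (simp add: omult_assoc)
  ultimately show ?thesis
    unfolding lhs cup1_letter_bd_def[of x "y @ [b]"]
    by (simp only: vadd_ac vadd_self vadd_self_left vadd_empty)
qed

lemma dOmega_cup1_letter: "e \<notin> set y \<Longrightarrow> dO (cup1_letter x y) = cup1_letter_bd x y"
proof (induction y arbitrary: x rule: rev_induct)
  case Nil
  show ?case by (rule dOmega_cup1_letter_Nil)
next
  case (snoc b y)
  then show ?case by (intro dOmega_cup1_letter_snoc) auto
qed

abbreviation cup1w :: "'b list \<Rightarrow> 'b list \<Rightarrow> 'b list set" where
  "cup1w \<equiv> cup1_word eps cop mu"

abbreviation cup1s :: "'b list set \<Rightarrow> 'b list set \<Rightarrow> 'b list set" where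
  "cup1s \<equiv> cup1 eps cop mu"

lemma finite_cup1_word [simp]: "finite (cup1w u w)"
  by (simp add: cup1_word_eq_deriv_ext)

lemma cup1_word_Nil [simp]: "cup1w [] = (\<lambda>w. {})"
  by (simp add: fun_eq_iff cup1_word_eq_deriv_ext)

lemma cup1_word_singleton [simp]: "cup1w [a] = cup1_letter a"
  by (simp add: fun_eq_iff cup1_word_eq_deriv_ext)

lemma cup1_word_append: "cup1w (u1 @ u2) w = vadd (omult {u1} (cup1w u2 w)) (omult (cup1w u1 w) {u2})"
  unfolding cup1_word_eq_deriv_ext by (rule deriv_ext_append) simp

lemma cup1_word_pair: "cup1w [p, q] w = vadd (omult {[p]} (cup1_letter q w)) (omult (cup1_letter p w) {[q]})"
  using cup1_word_append[of "[p]" "[q]" w] by simp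

lemma cup1_eq_zsum: "finite X \<Longrightarrow> finite Y \<Longrightarrow> cup1s X Y = zsum (\<lambda>u. zsum (\<lambda>w. cup1w u w) Y) X"
  by (simp add: cup1_def zsum_Times)

lemma finite_cup1 [simp]: "finite X \<Longrightarrow> finite Y \<Longrightarrow> finite (cup1s X Y)"
  by (simp add: cup1_eq_zsum)

lemma cup1_singleton_right: "cup1s Z {w} = zsum (\<lambda>z. cup1w z w) Z"
proof -
  have "Z \<times> {w} = (\<lambda>z. (z, w)) ` Z" by auto
  then show ?thesis by (simp add: cup1_def zsum_image inj_on_def)
qed

lemma cup1_singleton_left: "cup1s {u} Z = zsum (cup1w u) Z"
proof -
  have "{u} \<times> Z = (\<lambda>z. (u, z)) ` Z" by auto
  then show ?thesis by (simp add: cup1_def zsum_image inj_on_def)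
qed

lemma cup1_dOmega_left:
  "finite X \<Longrightarrow> finite Y \<Longrightarrow> cup1s (dO X) Y = zsum (\<lambda>u. zsum (\<lambda>w. cup1s (dOw u) {w}) Y) X"
  by (simp add: cup1_eq_zsum dOmega_def zsum_zsum cup1_singleton_right zsum_swap[of _ Y])

lemma cup1_dOmega_right:
  "finite X \<Longrightarrow> finite Y \<Longrightarrow> cup1s X (dO Y) = zsum (\<lambda>u. zsum (\<lambda>w. cup1s {u} (dOw w)) Y) X"
  by (simp add: cup1_eq_zsum dOmega_def zsum_zsum cup1_singleton_left)

lemma zsum_cup1_word_append_left:
  "finite Z \<Longrightarrow> zsum (\<lambda>z. cup1w (u @ z) w) Z = vadd (omult {u} (cup1s Z {w})) (omult (cup1w u w) Z)"
  by (simp add: cup1_word_append zsum_vadd cup1_singleton_right omult_zsum_right omult_singletons_zsum_right)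

lemma zsum_cup1_word_append_right:
  "finite Z \<Longrightarrow> zsum (\<lambda>z. cup1w (z @ u) w) Z = vadd (omult Z (cup1w u w)) (omult (cup1s Z {w}) {u})"
  by (simp add: cup1_word_append zsum_vadd cup1_singleton_right omult_zsum_left omult_singletons_zsum_left)

definition cup1_homotopy_formula :: "'b list \<Rightarrow> 'b list \<Rightarrow> bool" where
  "cup1_homotopy_formula u w \<longleftrightarrow>
     dO (cup1w u w) = vadd (vadd (cup1s (dOw u) {w}) (cup1s {u} (dOw w))) (vadd {u @ w} {w @ u})"

lemma cup1_homotopy_formula_Nil: "cup1_homotopy_formula [] w"
  by (simp add: cup1_homotopy_formula_def cup1_singleton_right cup1_singleton_left)

lemma cup1_homotopy_formula_singleton:
  assumes "a \<noteq> e" and "e \<notin> set w"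
  shows "cup1_homotopy_formula [a] w"
proof -
  have "dOw [a] = vadd (vadd (word1 (dA a)) (word2 (cop a))) (vadd {[a, e]} {[e, a]})"
    using dOmega_word1[of "{a}"] assms(1) by simp
  moreover have "zsum (\<lambda>z. cup1w z w) (word1 (dA a)) = zsum (\<lambda>x'. cup1_letter x' w) (dA a)"
    by (simp add: word1_def zsum_image inj_on_def)
  moreover have "zsum (\<lambda>z. cup1w z w) (word2 (cop a))
      = zsum (\<lambda>(p, q). vadd (omult (cup1_letter p w) {[q]}) (omult {[p]} (cup1_letter q w))) (cop a)"
    by (simp add: word2_def zsum_image inj_on_def prod_eq_iff split_def cup1_word_pair vadd_commute)
  ultimately have "cup1s (dOw [a]) {w} =
      vadd (vadd (zsum (\<lambda>x'. cup1_letter x' w) (dA a))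
                 (zsum (\<lambda>(p, q). vadd (omult (cup1_letter p w) {[q]}) (omult {[p]} (cup1_letter q w))) (cop a)))
           (vadd (vadd {[a] @ w} (omult (cup1_letter a w) {[e]})) (vadd (omult {[e]} (cup1_letter a w)) {w @ [a]}))"
    by (simp add: cup1_singleton_right zsum_vadd_set cup1_word_pair cup1_letter_unit del: append_Cons append_Nil)
  then show ?thesis
    using dOmega_cup1_letter[OF assms(2)]
    unfolding cup1_homotopy_formula_def cup1_letter_bd_def
    by (simp add: cup1_singleton_left) (simp only: vadd_ac vadd_self vadd_self_left vadd_empty)
qed

lemma cup1_homotopy_formula_append:
  assumes "cup1_homotopy_formula u1 w" and "cup1_homotopy_formula u2 w"
  shows "cup1_homotopy_formula (u1 @ u2) w"
proof -
  define C1 where "C1 = cup1w u1 w"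
  define C2 where "C2 = cup1w u2 w"
  have "dO C1 = vadd (vadd (cup1s (dOw u1) {w}) (cup1s {u1} (dOw w))) (vadd {u1 @ w} {w @ u1})"
    using assms(1) unfolding cup1_homotopy_formula_def C1_def .
  moreover have "dO C2 = vadd (vadd (cup1s (dOw u2) {w}) (cup1s {u2} (dOw w))) (vadd {u2 @ w} {w @ u2})"
    using assms(2) unfolding cup1_homotopy_formula_def C2_def .
  ultimately have lhs: "dO (cup1w (u1 @ u2) w) =
     vadd (vadd (vadd (vadd (omult {u1} (cup1s (dOw u2) {w})) (omult {u1} (cup1s {u2} (dOw w))))
                      (vadd {u1 @ u2 @ w} {u1 @ w @ u2})) (omult (dOw u1) C2))
          (vadd (omult C1 (dOw u2)) (vadd (vadd (omult (cup1s (dOw u1) {w}) {u2}) (omult (cup1s {u1} (dOw w)) {u2}))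
                                          (vadd {u1 @ w @ u2} {w @ u1 @ u2})))"
    unfolding cup1_word_append C1_def[symmetric] C2_def[symmetric]
    by (simp add: C1_def C2_def dOmega_vadd dOmega_omult omult_vadd_left omult_vadd_right)
  have "cup1s (dOw (u1 @ u2)) {w}
      = vadd (zsum (\<lambda>z. cup1w (u1 @ z) w) (dOw u2)) (zsum (\<lambda>z. cup1w (z @ u2) w) (dOw u1))"
    by (simp add: dOmega_word_append cup1_singleton_right zsum_vadd_set omult_singleton_left
        omult_singleton_right zsum_image inj_on_def)
  also have "\<dots> = vadd (vadd (omult {u1} (cup1s (dOw u2) {w})) (omult C1 (dOw u2)))
                       (vadd (omult (dOw u1) C2) (omult (cup1s (dOw u1) {w}) {u2}))"
    unfolding C1_def C2_def by (simp add: zsum_cup1_word_append_left zsum_cup1_word_append_right)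
  finally have rhs1: "cup1s (dOw (u1 @ u2)) {w} = \<dots>" .
  have "zsum (cup1w (u1 @ u2)) (dOw w)
      = zsum (\<lambda>s. vadd (omult {u1} (cup1w u2 s)) (omult (cup1w u1 s) {u2})) (dOw w)"
    by (rule zsum_cong) (rule cup1_word_append)
  then have rhs2: "cup1s {u1 @ u2} (dOw w)
      = vadd (omult {u1} (cup1s {u2} (dOw w))) (omult (cup1s {u1} (dOw w)) {u2})"
    by (simp add: cup1_singleton_left zsum_vadd omult_zsum_right omult_zsum_left)
  show ?thesis
    unfolding cup1_homotopy_formula_def lhs rhs1 rhs2
    by (simp only: append_assoc vadd_ac vadd_self vadd_self_left vadd_empty)
qed

lemma cup1_homotopy_formula_words:
  assumes "e \<notin> set u" and "e \<notin> set w"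
  shows "cup1_homotopy_formula u w"
  using assms(1)
proof (induction u rule: rev_induct)
  case (snoc a u)
  then show ?case
    using assms(2) by (intro cup1_homotopy_formula_append cup1_homotopy_formula_singleton) auto
qed (rule cup1_homotopy_formula_Nil)

theorem dOmega_cup1:
  assumes "cobar_elem e X" and "cobar_elem e Y"
  shows "dO (cup1s X Y) = vadd (vadd (cup1s (dO X) Y) (cup1s X (dO Y))) (vadd (omult X Y) (omult Y X))"
proof -
  have fin: "finite X" "finite Y" and no_unit: "\<And>u. u \<in> X \<union> Y \<Longrightarrow> e \<notin> set u"
    using assms by (auto simp: cobar_elem_def)
  have "dO (cup1s X Y) = zsum (\<lambda>u. zsum (\<lambda>w. dO (cup1w u w)) Y) X"
    using fin by (simp add: cup1_eq_zsum dOmega_zsum)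
  also have "\<dots> = zsum (\<lambda>u. zsum (\<lambda>w.
      vadd (vadd (cup1s (dOw u) {w}) (cup1s {u} (dOw w))) (vadd {u @ w} {w @ u})) Y) X"
    using cup1_homotopy_formula_words no_unit
    by (intro zsum_cong) (simp add: cup1_homotopy_formula_def)
  also have "\<dots> = vadd (vadd (cup1s (dO X) Y) (cup1s X (dO Y))) (vadd (omult X Y) (omult Y X))"
    using fin by (simp add: zsum_vadd cup1_dOmega_left cup1_dOmega_right omult_eq_zsum zsum_swap[of X Y])
  finally show ?thesis .
qed

end

theorem mainTheorem2:
  fixes deg :: "'b \<Rightarrow> nat" and e :: 'b and eps :: "'b \<Rightarrow> bool"
    and dA :: "'b \<Rightarrow> 'b set" and cop :: "'b \<Rightarrow> ('b \<times> 'b) set" and mu :: "'b \<Rightarrow> 'b \<Rightarrow> 'b set"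
    and X Y :: "'b list set"
  assumes "conn_dg_bialgebra deg e eps dA cop mu"
    and "cobar_elem e X" and "cobar_elem e Y"
  shows "dOmega e dA cop (cup1 eps cop mu X Y)
       = vadd (vadd (cup1 eps cop mu (dOmega e dA cop X) Y) (cup1 eps cop mu X (dOmega e dA cop Y)))
              (vadd (omult X Y) (omult Y X))"
proof -
  interpret conn_dg_bialg deg e eps dA cop mu
    by (rule conn_dg_bialg.intro) (rule assms(1))
  show ?thesis using dOmega_cup1[OF assms(2,3)] .
qed

end
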